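(* Let $d\in\mathbb{N}$. For every $r\in\mathcal{R}$, the set $\Pi_r\subset\mathbb{R}^d\times\mathbb{R}^d$ is Lebesgue measurable and has measure $0$. Moreover, for every $x\in\mathbb{R}^d$, the set $\Phi_r(x)=\{y\in\mathbb{R}^d:(x,y)\in\Pi_r\}$ has Lebesgue measure $0$.
   Context: For $t\in\mathbb{R}$, $\|t\|$ is the distance from $t$ to $\mathbb{Z}$. Write $\mathbb{N}=\{1,2,\dots\}$. $\mathcal{R}=\{r\in\mathbb{R}^d: r_i\ge0,\ \sum_i r_i=1\}$. For $r\in\mathcal{R}$ and $x\in\mathbb{R}^d$, $\|x\|_r=(\max_{1\le i\le d}\|x_i\|^{1/r_i})^{1/d}$. $\mathcal{D}$ is the set of all non-increasing $\psi:\mathbb{N}\to\mathbb{R}_{\ge0}$ with $\sum_n\psi(n)^d=\infty$. $W(r,\psi)$ is the set of $(x,y)\in\mathbb{R}^d\times\mathbb{R}^d$ such that $\|nx+y\|_r<\psi(n)$ for infinitely many $n\in\mathbb{N}$, and $\Pi_r=\bigcap_{\psi\in\mathcal{D}}W(r,\psi)$. *)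

theory Defs
  imports "HOL-Analysis.Analysis"
begin

definition dist_Z :: "real \<Rightarrow> real" where
  "dist_Z t = infdist t \<int>"

definition weights :: "(real ^ 'n) set" where
  "weights = {r. (\<forall>i. r $ i \<ge> 0) \<and> (\<Sum>i\<in>UNIV. r $ i) = 1}"

text \<open>Component term dist_Z(x_i)^(1/r_i); for r_i = 0 the exponent is +infinity and,
  since dist_Z(x_i) \<le> 1/2 < 1, the term is 0.\<close>
definition comp_term :: "real \<Rightarrow> real \<Rightarrow> real" where
  "comp_term ri t = (if ri = 0 then 0 else dist_Z t powr (1 / ri))"

definition rnorm :: "real ^ 'n \<Rightarrow> real ^ 'n \<Rightarrow> real" where
  "rnorm r x = (Max (range (\<lambda>i. comp_term (r $ i) (x $ i)))) powr (1 / real CARD('n))"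

definition classD :: "'n itself \<Rightarrow> (nat \<Rightarrow> real) set" where
  "classD _ = {\<psi>. (\<forall>n\<ge>1. \<psi> n \<ge> 0) \<and> (\<forall>m n. 1 \<le> m \<longrightarrow> m \<le> n \<longrightarrow> \<psi> n \<le> \<psi> m)
                 \<and> \<not> summable (\<lambda>n. \<psi> (Suc n) ^ CARD('n))}"

definition W_set :: "real ^ 'n \<Rightarrow> (nat \<Rightarrow> real) \<Rightarrow> ((real ^ 'n) \<times> (real ^ 'n)) set" where
  "W_set r \<psi> = {(x::real^'n, y::real^'n). infinite {n::nat. n \<ge> 1 \<and> rnorm r (real n *\<^sub>R x + y) < \<psi> n}}"

definition Pi_set :: "real ^ 'n \<Rightarrow> ((real ^ 'n) \<times> (real ^ 'n)) set" where
  "Pi_set r = (\<Inter>\<psi>\<in>classD TYPE('n). W_set r \<psi>)"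

definition Phi_set :: "real ^ 'n \<Rightarrow> real ^ 'n \<Rightarrow> (real ^ 'n) set" where
  "Phi_set r x = {y. (x, y) \<in> Pi_set r}"

end

theory Submission
  imports Defs
begin

text \<open>
  If (x, y) \<in> \<Pi>_r, then min {||m x + y||_r^d | 1 \<le> m \<le> n} = o(1/n): otherwise half the
  running minimum of ||m x + y||_r is a function of class D that the pair never beats.
  For fixed x, n and m, the bounded y with ||m x + y||_r^d \<le> \<epsilon>/n are covered by O(1) boxes
  with side lengths O((\<epsilon>/n)^r_i), whose volume is O(\<epsilon>/n) because the r_i sum to 1.
  Taking the union over m \<le> n, the x-sections of the Borel set of o(1/n)-approximable
  pairs have measure O(\<epsilon>) for every \<epsilon> > 0, hence are null, and Tonelli's theorem makes
  the set itself null. It contains \<Pi>_r, and its x-sections contain the sets \<Phi>_r(x).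
\<close>

lemma dist_Z_nonneg: "0 \<le> dist_Z t"
  by (simp add: dist_Z_def infdist_nonneg)

lemma dist_Z_attained: "\<exists>j::int. dist_Z t = \<bar>t - of_int j\<bar>"
proof -
  obtain a where "a \<in> (\<int>::real set)" "infdist t \<int> = dist t a"
    by (rule infdist_attains_inf[of "\<int>::real set" t]) (use Ints_0 in auto)
  then show ?thesis
    by (auto simp: dist_Z_def dist_real_def elim!: Ints_cases)
qed

lemma continuous_on_dist_Z [continuous_intros]:
  "continuous_on S f \<Longrightarrow> continuous_on S (\<lambda>x. dist_Z (f x))"
  unfolding dist_Z_def by (rule continuous_on_infdist)

lemma comp_term_nonneg: "0 \<le> comp_term a t"
  by (simp add: comp_term_def)

lemma rnorm_power_card:
  fixes r z :: "real ^ 'n"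
  shows "rnorm r z ^ CARD('n) = Max (range (\<lambda>i. comp_term (r $ i) (z $ i)))"
proof -
  define M where "M = Max (range (\<lambda>i. comp_term (r $ i) (z $ i)))"
  have "comp_term (r $ i) (z $ i) \<le> M" for i
    unfolding M_def by (rule Max_ge) auto
  then have "0 \<le> M"
    by (meson comp_term_nonneg order_trans)
  then have "(M powr (1 / CARD('n))) ^ CARD('n) = M"
    by (cases "M = 0") (simp_all add: powr_power)
  then show ?thesis by (simp add: rnorm_def M_def)
qed

lemma dist_Z_less_if_rnorm_power_less:
  fixes r z :: "real ^ 'n"
  assumes "rnorm r z ^ CARD('n) < \<delta>" and "0 < r $ i"
  shows "dist_Z (z $ i) < \<delta> powr (r $ i)"
proof -
  have "comp_term (r $ i) (z $ i) \<le> rnorm r z ^ CARD('n)"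
    unfolding rnorm_power_card by (rule Max_ge) auto
  then have "dist_Z (z $ i) powr (1 / r $ i) < \<delta>"
    using assms by (simp add: comp_term_def)
  then have "(dist_Z (z $ i) powr (1 / r $ i)) powr (r $ i) < \<delta> powr (r $ i)"
    using assms(2) by (intro powr_less_mono2) auto
  then show ?thesis
    using assms(2) dist_Z_nonneg[of "z $ i"] by (simp add: powr_powr)
qed

section \<open>Points of \<Pi>_r are o(1/n)-approximable\<close>

lemma not_summable_if_frequently_ge_inverse:
  fixes f :: "nat \<Rightarrow> real"
  assumes antimono: "\<And>m n. 1 \<le> m \<Longrightarrow> m \<le> n \<Longrightarrow> f n \<le> f m"
    and "0 < c" and large: "\<And>N. \<exists>n\<ge>N. c / real n \<le> f n"
  shows "\<not> summable (\<lambda>n. f (Suc n))"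
proof
  assume "summable (\<lambda>n. f (Suc n))"
  then obtain N where N: "\<And>m n. N \<le> m \<Longrightarrow> norm (\<Sum>k\<in>{m..<n}. f (Suc k)) < c / 2"
    using \<open>0 < c\<close> unfolding summable_Cauchy by (meson half_gt_zero)
  obtain n where n: "2 * N + 2 \<le> n" "c / real n \<le> f n"
    using large by blast
  txt \<open>The terms with n/2 \<le> k < n alone sum to at least c/2.\<close>
  have "c / real n \<le> f (Suc k)" if "k \<in> {n div 2..<n}" for k
    using n(2) antimono[of "Suc k" n] that by auto
  then have "real (card {n div 2..<n}) * (c / real n) \<le> (\<Sum>k\<in>{n div 2..<n}. f (Suc k))"
    using sum_mono[of "{n div 2..<n}" "\<lambda>_. c / real n"] by simp
  moreover have "c / 2 \<le> real (card {n div 2..<n}) * (c / real n)"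
  proof -
    have "real n / 2 \<le> real (card {n div 2..<n})" by auto
    then have "real n / 2 * (c / real n) \<le> real (card {n div 2..<n}) * (c / real n)"
      using \<open>0 < c\<close> by (intro mult_right_mono) auto
    then show ?thesis using n(1) by simp
  qed
  moreover have "norm (\<Sum>k\<in>{n div 2..<n}. f (Suc k)) < c / 2"
    using N n(1) by simp
  moreover have "(\<Sum>k\<in>{n div 2..<n}. f (Suc k)) \<le> norm (\<Sum>k\<in>{n div 2..<n}. f (Suc k))"
    by simp
  ultimately show False
    by linarith
qed

text \<open>The function of class D that a sequence without o(1/n) minima never beats.\<close>
definition half_running_min :: "(nat \<Rightarrow> real) \<Rightarrow> nat \<Rightarrow> real" where
  "half_running_min a n = Min (a ` {1..max 1 n}) / 2"

lemma half_running_min_pos: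
  assumes "\<And>m. 1 \<le> m \<Longrightarrow> 0 < a m"
  shows "0 < half_running_min a n"
  using assms by (simp add: half_running_min_def)

lemma half_running_min_less:
  assumes "\<And>m. 1 \<le> m \<Longrightarrow> 0 < a m" and "1 \<le> n"
  shows "half_running_min a n < a n"
proof -
  have "Min (a ` {1..max 1 n}) \<le> a n"
    using \<open>1 \<le> n\<close> by (intro Min_le) auto
  then show ?thesis
    using assms(1)[OF \<open>1 \<le> n\<close>] by (simp add: half_running_min_def)
qed

lemma half_running_min_antimono:
  assumes "1 \<le> m" and "m \<le> n"
  shows "half_running_min a n \<le> half_running_min a m"
  unfolding half_running_min_def using assms
  by (intro divide_right_mono Min_antimono image_mono) auto

lemma half_running_min_attained:
  assumes "1 \<le> n"
  obtains m where "m \<in> {1..n}" and "a m = 2 * half_running_min a n"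
proof -
  have "Min (a ` {1..n}) \<in> a ` {1..n}"
    using assms by (intro Min_in) auto
  then obtain m where "m \<in> {1..n}" "Min (a ` {1..n}) = a m"
    by blast
  moreover have "half_running_min a n = Min (a ` {1..n}) / 2"
    using assms by (simp add: half_running_min_def max_absorb2)
  ultimately show ?thesis
    using that by simp
qed

lemma half_running_min_in_classD:
  assumes pos: "\<And>m. 1 \<le> m \<Longrightarrow> 0 < a m" and "0 < \<epsilon>"
    and large: "\<And>N. \<exists>n\<ge>N. \<forall>m\<in>{1..n}. \<epsilon> / real n \<le> a m ^ CARD('n)"
  shows "half_running_min a \<in> classD TYPE('n::finite)"
proof -
  let ?\<psi> = "half_running_min a"
  have "\<not> summable (\<lambda>n. ?\<psi> (Suc n) ^ CARD('n))"
  proof (rule not_summable_if_frequently_ge_inverse)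
    show "?\<psi> n ^ CARD('n) \<le> ?\<psi> m ^ CARD('n)" if "1 \<le> m" "m \<le> n" for m n
      using half_running_min_antimono[OF that, of a] half_running_min_pos[where a = a, OF pos, of n]
      by (intro power_mono) auto
    show "0 < \<epsilon> / 2 ^ CARD('n)"
      using \<open>0 < \<epsilon>\<close> by simp
    fix N
    obtain n where n: "N \<le> n" "1 \<le> n" "\<forall>m\<in>{1..n}. \<epsilon> / real n \<le> a m ^ CARD('n)"
      using large[of "max 1 N"] by auto
    obtain m where "m \<in> {1..n}" "a m = 2 * ?\<psi> n"
      using half_running_min_attained[OF \<open>1 \<le> n\<close>] .
    then have "\<epsilon> / real n \<le> (2 * ?\<psi> n) ^ CARD('n)"
      using n(3) by metis
    then have "\<epsilon> / real n \<le> ?\<psi> n ^ CARD('n) * 2 ^ CARD('n)"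
      by (simp add: power_mult_distrib mult.commute)
    then have "\<epsilon> / real n / 2 ^ CARD('n) \<le> ?\<psi> n ^ CARD('n)"
      by (metis pos_divide_le_eq zero_less_numeral zero_less_power)
    then show "\<exists>n\<ge>N. \<epsilon> / 2 ^ CARD('n) / real n \<le> ?\<psi> n ^ CARD('n)"
      using n(1) by (metis divide_divide_eq_left mult.commute)
  qed
  then show ?thesis
    using half_running_min_pos[where a = a, OF pos] half_running_min_antimono
    by (auto simp: classD_def less_imp_le)
qed

lemma eventually_min_power_small_if_beats_classD:
  fixes a :: "nat \<Rightarrow> real"
  assumes nonneg: "\<And>n. 0 \<le> a n"
    and beats: "\<And>\<psi>. \<psi> \<in> classD TYPE('n::finite) \<Longrightarrow> infinite {n. 1 \<le> n \<and> a n < \<psi> n}"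
    and "0 < \<epsilon>"
  shows "\<exists>N. \<forall>n\<ge>N. \<exists>m\<in>{1..n}. a m ^ CARD('n) < \<epsilon> / real n"
proof (rule ccontr)
  assume "\<not> ?thesis"
  then have large: "\<And>N. \<exists>n\<ge>N. \<forall>m\<in>{1..n}. \<epsilon> / real n \<le> a m ^ CARD('n)"
    by (auto simp: not_less)
  have pos: "0 < a m" if "1 \<le> m" for m
  proof -
    obtain n where n: "m \<le> n" "\<forall>k\<in>{1..n}. \<epsilon> / real n \<le> a k ^ CARD('n)"
      using large by blast
    then have "\<epsilon> / real n \<le> a m ^ CARD('n)"
      using that by auto
    moreover have "0 < \<epsilon> / real n"
      using n(1) that \<open>0 < \<epsilon>\<close> by simp
    ultimately have "0 < a m ^ CARD('n)"
      by linarith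
    then show ?thesis
      using nonneg[of m] by (cases "a m = 0") (auto simp: power_0_left)
  qed
  have "infinite {n. 1 \<le> n \<and> a n < half_running_min a n}"
    by (rule beats[OF half_running_min_in_classD[where a = a, OF pos \<open>0 < \<epsilon>\<close> large]])
  moreover have "{n. 1 \<le> n \<and> a n < half_running_min a n} = {}"
    using half_running_min_less[where a = a, OF pos] by force
  ultimately show False
    by (metis finite.emptyI)
qed

lemma emeasure_UN_le_card_mult:
  fixes B :: "'i \<Rightarrow> 'a set"
  assumes "finite F" and "\<And>p. p \<in> F \<Longrightarrow> B p \<in> sets M"
    and "\<And>p. p \<in> F \<Longrightarrow> emeasure M (B p) \<le> ennreal X" and "0 \<le> X"
  shows "emeasure M (\<Union>p\<in>F. B p) \<le> ennreal (real (card F) * X)"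
proof -
  have "emeasure M (\<Union>p\<in>F. B p) \<le> (\<Sum>p\<in>F. emeasure M (B p))"
    using assms(1,2) by (intro emeasure_subadditive_finite) auto
  also have "\<dots> \<le> (\<Sum>p\<in>F. ennreal X)"
    using assms(3) by (rule sum_mono)
  also have "\<dots> = ennreal (real (card F) * X)"
    using \<open>0 \<le> X\<close> by (simp add: ennreal_mult' ennreal_of_nat_eq_real_of_nat)
  finally show ?thesis .
qed

lemma sets_eventually_in:
  fixes S :: "nat \<Rightarrow> 'a set"
  assumes "\<And>n. S n \<in> sets M"
  shows "{y. \<exists>N. \<forall>n\<ge>N. y \<in> S n} \<in> sets M"
proof -
  have "{y. \<exists>N. \<forall>n\<ge>N. y \<in> S n} = (\<Union>N. \<Inter>n\<in>{N..}. S n)"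
    by auto
  then show ?thesis
    using assms by (auto intro!: sets.countable_UN'' sets.countable_INT')
qed

lemma emeasure_eventually_in_le:
  fixes S :: "nat \<Rightarrow> 'a set"
  assumes sets: "\<And>n. S n \<in> sets M" and bound: "\<And>n. N\<^sub>0 \<le> n \<Longrightarrow> emeasure M (S n) \<le> c"
  shows "emeasure M {y. \<exists>N. \<forall>n\<ge>N. y \<in> S n} \<le> c"
proof -
  define T where "T N = (\<Inter>n\<in>{N + N\<^sub>0..}. S n)" for N
  have T_sets: "T N \<in> sets M" for N
    unfolding T_def using sets by (intro sets.countable_INT') auto
  have "{y. \<exists>N. \<forall>n\<ge>N. y \<in> S n} = (\<Union>N. T N)"
  proof (intro equalityI subsetI)
    fix y assume "y \<in> {y. \<exists>N. \<forall>n\<ge>N. y \<in> S n}"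
    then obtain N where "\<forall>n\<ge>N. y \<in> S n"
      by blast
    then have "y \<in> T N"
      by (simp add: T_def)
    then show "y \<in> (\<Union>N. T N)"
      by blast
  next
    fix y assume "y \<in> (\<Union>N. T N)"
    then obtain N where "y \<in> T N"
      by blast
    then have "\<forall>n\<ge>N + N\<^sub>0. y \<in> S n"
      by (simp add: T_def)
    then show "y \<in> {y. \<exists>N. \<forall>n\<ge>N. y \<in> S n}"
      by blast
  qed
  also have "emeasure M (\<Union>N. T N) = (SUP N. emeasure M (T N))"
    using T_sets by (intro SUP_emeasure_incseq[symmetric]) (auto simp: incseq_def T_def)
  also have "\<dots> \<le> c"
  proof (rule SUP_least)
    fix N
    have "T N \<subseteq> S (N + N\<^sub>0)"
      by (auto simp: T_def)
    then have "emeasure M (T N) \<le> emeasure M (S (N + N\<^sub>0))"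
      using sets by (rule emeasure_mono)
    also have "\<dots> \<le> c"
      by (rule bound) simp
    finally show "emeasure M (T N) \<le> c" .
  qed
  finally show ?thesis .
qed

lemma sets_Pair_vimage_borel:
  fixes A :: "('a::euclidean_space \<times> 'b::euclidean_space) set"
  assumes "A \<in> sets borel"
  shows "Pair x -` A \<in> sets borel"
proof -
  have "A \<in> sets (lborel \<Otimes>\<^sub>M lborel)"
    using assms by (simp only: lborel_prod sets_lborel)
  then have "Pair x -` A \<in> sets lborel"
    by (rule sets_Pair1)
  then show ?thesis
    by simp
qed

lemma null_sets_if_sections_null:
  fixes A :: "('a::euclidean_space \<times> 'b::euclidean_space) set"
  assumes "A \<in> sets borel" and "\<And>x. Pair x -` A \<in> null_sets lborel"
  shows "A \<in> null_sets lborel"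
proof -
  have "A \<in> sets (lborel \<Otimes>\<^sub>M lborel)"
    using assms(1) by (simp only: lborel_prod sets_lborel)
  then have "emeasure (lborel \<Otimes>\<^sub>M lborel) A = (\<integral>\<^sup>+x. emeasure lborel (Pair x -` A) \<partial>lborel)"
    by (rule lborel.emeasure_pair_measure_alt)
  also have "\<dots> = 0"
    using assms(2) by (simp add: null_setsD1)
  finally show ?thesis
    using assms(1) unfolding lborel_prod by (intro null_setsI) simp_all
qed

section \<open>Volume of near-integer points in a box\<close>

text \<open>z \<in> near_int r \<delta> iff ||z||_r^d \<le> \<delta>; coordinates with r_i = 0 impose no condition.\<close>
definition near_int :: "real ^ 'n \<Rightarrow> real \<Rightarrow> (real ^ 'n) set" where
  "near_int r \<delta> = {z. \<forall>i. 0 < r $ i \<longrightarrow> dist_Z (z $ i) \<le> \<delta> powr (r $ i)}"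

definition near_int_box :: "real ^ 'n \<Rightarrow> nat \<Rightarrow> real \<Rightarrow> real ^ 'n \<Rightarrow> (real ^ 'n) set" where
  "near_int_box r K \<delta> c = {y. (\<forall>i. \<bar>y $ i\<bar> \<le> real K) \<and> c + y \<in> near_int r \<delta>}"

lemma closed_near_int: "closed (near_int r \<delta>)"
  unfolding near_int_def
  by (intro closed_Collect_all closed_Collect_imp closed_Collect_le continuous_intros) auto

lemma closed_near_int_box: "closed (near_int_box r K \<delta> c)"
proof -
  have "near_int_box r K \<delta> c = {y. \<forall>i. \<bar>y $ i\<bar> \<le> real K} \<inter> (\<lambda>y. c + y) -` near_int r \<delta>"
    by (auto simp: near_int_box_def)
  moreover have "closed {y :: real ^ 'n. \<forall>i. \<bar>y $ i\<bar> \<le> real K}"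
    by (intro closed_Collect_all closed_Collect_le continuous_intros)
  moreover have "closed ((\<lambda>y. c + y) -` near_int r \<delta>)"
    by (intro continuous_closed_vimage closed_near_int continuous_intros)
  ultimately show ?thesis
    by (metis closed_Int)
qed

lemma int_in_ceiling_floor_interval:
  assumes "\<bar>t - of_int p\<bar> \<le> of_int k"
  shows "p \<in> {\<lceil>t\<rceil> - k .. \<lfloor>t\<rfloor> + k}"
proof -
  have "\<lceil>t\<rceil> \<le> p + k" using assms by (simp add: ceiling_le_iff; linarith)
  moreover have "p - k \<le> \<lfloor>t\<rfloor>" using assms by (simp add: le_floor_iff; linarith)
  ultimately show ?thesis by simp
qed

lemma card_ceiling_floor_interval_le: "card {\<lceil>t\<rceil> - int k .. \<lfloor>t\<rfloor> + int k} \<le> 2 * k + 1"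
  using floor_le_ceiling[of t] by (simp add: nat_le_iff)

definition int_window :: "real ^ 'n \<Rightarrow> nat \<Rightarrow> real ^ 'n \<Rightarrow> ('n \<Rightarrow> int) set" where
  "int_window r K c =
     PiE UNIV (\<lambda>i. if 0 < r $ i then {\<lceil>c $ i\<rceil> - int (K + 1) .. \<lfloor>c $ i\<rfloor> + int (K + 1)} else {0})"

definition int_box :: "real ^ 'n \<Rightarrow> nat \<Rightarrow> real \<Rightarrow> real ^ 'n \<Rightarrow> ('n \<Rightarrow> int) \<Rightarrow> (real ^ 'n) set" where
  "int_box r K \<delta> c p =
     cbox (\<chi> i. if 0 < r $ i then of_int (p i) - c $ i - \<delta> powr (r $ i) else - real K)
          (\<chi> i. if 0 < r $ i then of_int (p i) - c $ i + \<delta> powr (r $ i) else real K)"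

lemma mem_int_box_iff:
  "y \<in> int_box r K \<delta> c p \<longleftrightarrow>
     (\<forall>i. if 0 < r $ i then \<bar>c $ i + y $ i - of_int (p i)\<bar> \<le> \<delta> powr (r $ i) else \<bar>y $ i\<bar> \<le> real K)"
  unfolding int_box_def mem_box_cart(2) by (rule all_cong1) (auto simp: abs_le_iff)

lemma finite_int_window: "finite (int_window r K c)"
  by (simp add: int_window_def finite_PiE)

lemma card_int_window_le:
  fixes r c :: "real ^ 'n"
  shows "card (int_window r K c) \<le> (2 * K + 3) ^ CARD('n)"
proof -
  let ?W = "\<lambda>i. if 0 < r $ i then {\<lceil>c $ i\<rceil> - int (K + 1) .. \<lfloor>c $ i\<rfloor> + int (K + 1)} else {0}"
  have "card (?W i) \<le> 2 * K + 3" for i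
    using card_ceiling_floor_interval_le[of "c $ i" "K + 1"] by simp
  then have "(\<Prod>i\<in>UNIV. card (?W i)) \<le> (\<Prod>i\<in>(UNIV :: 'n set). 2 * K + 3)"
    by (intro prod_mono) auto
  then show ?thesis
    by (simp add: int_window_def card_PiE)
qed

lemma near_int_box_subset_int_boxes:
  fixes r c :: "real ^ 'n"
  assumes "0 < \<delta>" and "\<delta> \<le> 1"
  shows "near_int_box r K \<delta> c \<subseteq> (\<Union>p\<in>int_window r K c. int_box r K \<delta> c p)"
proof
  fix y assume y: "y \<in> near_int_box r K \<delta> c"
  then have y_le: "\<bar>y $ i\<bar> \<le> real K" for i
    by (simp add: near_int_box_def)
  have "\<exists>j::int. 0 < r $ i \<longrightarrow> \<bar>c $ i + y $ i - j\<bar> \<le> \<delta> powr (r $ i)" for i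
  proof (cases "0 < r $ i")
    case True
    then have "dist_Z (c $ i + y $ i) \<le> \<delta> powr (r $ i)"
      using y by (simp add: near_int_box_def near_int_def)
    moreover obtain j :: int where "dist_Z (c $ i + y $ i) = \<bar>c $ i + y $ i - j\<bar>"
      using dist_Z_attained by blast
    ultimately show ?thesis by auto
  qed simp
  then obtain q :: "'n \<Rightarrow> int"
    where q: "\<And>i. 0 < r $ i \<Longrightarrow> \<bar>c $ i + y $ i - q i\<bar> \<le> \<delta> powr (r $ i)"
    by metis
  define p where "p i = (if 0 < r $ i then q i else 0)" for i
  have "p \<in> int_window r K c"
    unfolding int_window_def PiE_iff
  proof (intro conjI allI ballI)
    fix i :: 'n
    show "p i \<in> (if 0 < r $ i then {\<lceil>c $ i\<rceil> - int (K + 1) .. \<lfloor>c $ i\<rfloor> + int (K + 1)} else {0})"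
    proof (cases "0 < r $ i")
      case True
      then have "\<delta> powr (r $ i) \<le> 1"
        using assms by (simp add: powr_le1)
      then have "\<bar>c $ i - of_int (p i)\<bar> \<le> of_int (int (K + 1))"
        using q[OF True] y_le[of i] True by (simp add: p_def; linarith)
      then show ?thesis
        using True int_in_ceiling_floor_interval[of "c $ i" "p i" "int (K + 1)"] by simp
    qed (simp add: p_def)
  qed (simp add: p_def)
  moreover have "y \<in> int_box r K \<delta> c p"
    unfolding mem_int_box_iff using q y_le by (auto simp: p_def)
  ultimately show "y \<in> (\<Union>p\<in>int_window r K c. int_box r K \<delta> c p)"
    by blast
qed

lemma emeasure_int_box_le:
  fixes r c :: "real ^ 'n"
  assumes r: "r \<in> weights" and "0 < \<delta>"
  shows "emeasure lborel (int_box r K \<delta> c p) \<le> ennreal ((2 * real K + 2) ^ CARD('n) * \<delta>)"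
proof -
  define lo hi where
    "lo = (\<chi> i. if 0 < r $ i then of_int (p i) - c $ i - \<delta> powr (r $ i) else - real K)" and
    "hi = (\<chi> i. if 0 < r $ i then of_int (p i) - c $ i + \<delta> powr (r $ i) else real K)"
  have "(\<Prod>i\<in>UNIV. hi $ i - lo $ i) \<le> (\<Prod>i\<in>UNIV. (2 * real K + 2) * \<delta> powr (r $ i))"
  proof (rule prod_mono)
    fix i
    have "0 \<le> r $ i"
      using r by (simp add: weights_def)
    then show "0 \<le> hi $ i - lo $ i \<and> hi $ i - lo $ i \<le> (2 * real K + 2) * \<delta> powr (r $ i)"
      using \<open>0 < \<delta>\<close> by (auto simp: lo_def hi_def algebra_simps)
  qed
  also have "\<dots> = (2 * real K + 2) ^ CARD('n) * \<delta>"
    using r \<open>0 < \<delta>\<close> powr_sum[of \<delta> "\<lambda>i. r $ i" UNIV]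
    by (simp add: prod.distrib weights_def)
  finally have "measure lborel (cbox lo hi) \<le> (2 * real K + 2) ^ CARD('n) * \<delta>"
    using \<open>0 < \<delta>\<close> by (simp add: content_cbox_if_cart)
  moreover have "emeasure lborel (cbox lo hi) = ennreal (measure lborel (cbox lo hi))"
    using emeasure_lborel_cbox_finite by (intro emeasure_eq_ennreal_measure) (simp add: less_top)
  ultimately show ?thesis
    by (simp add: int_box_def lo_def hi_def ennreal_leI)
qed

lemma emeasure_near_int_box_le:
  fixes r c :: "real ^ 'n"
  assumes r: "r \<in> weights" and "0 < \<delta>" and "\<delta> \<le> 1"
  shows "emeasure lborel (near_int_box r K \<delta> c)
           \<le> ennreal (((2 * real K + 3) * (2 * real K + 2)) ^ CARD('n) * \<delta>)"
proof -
  have box_sets: "int_box r K \<delta> c p \<in> sets lborel" for p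
    by (simp add: int_box_def borel_closed)
  have "(\<Union>p\<in>int_window r K c. int_box r K \<delta> c p) \<in> sets lborel"
    using finite_int_window box_sets by (intro sets.finite_UN) auto
  with near_int_box_subset_int_boxes[OF \<open>0 < \<delta>\<close> \<open>\<delta> \<le> 1\<close>]
  have "emeasure lborel (near_int_box r K \<delta> c) \<le> emeasure lborel (\<Union>p\<in>int_window r K c. int_box r K \<delta> c p)"
    by (rule emeasure_mono)
  also have "\<dots> \<le> ennreal (real (card (int_window r K c)) * ((2 * real K + 2) ^ CARD('n) * \<delta>))"
    using emeasure_int_box_le[OF r \<open>0 < \<delta>\<close>] finite_int_window box_sets \<open>0 < \<delta>\<close>
    by (intro emeasure_UN_le_card_mult) auto
  also have "\<dots> \<le> ennreal ((2 * real K + 3) ^ CARD('n) * ((2 * real K + 2) ^ CARD('n) * \<delta>))"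
  proof -
    have "real (card (int_window r K c)) \<le> real ((2 * K + 3) ^ CARD('n))"
      using card_int_window_le by (rule of_nat_mono)
    then show ?thesis
      using \<open>0 < \<delta>\<close> by (intro ennreal_leI mult_right_mono) auto
  qed
  finally show ?thesis
    by (simp only: power_mult_distrib mult.assoc)
qed

section \<open>The set of o(1/n)-approximable pairs is null\<close>

definition approx_set :: "real ^ 'n \<Rightarrow> nat \<Rightarrow> real \<Rightarrow> nat \<Rightarrow> ((real ^ 'n) \<times> (real ^ 'n)) set" where
  "approx_set r K \<epsilon> n = {(x, y). \<exists>m\<in>{1..n}. y \<in> near_int_box r K (\<epsilon> / real n) (real m *\<^sub>R x)}"

text \<open>Pairs with bounded y and min {||m x + y||_r^d | 1 \<le> m \<le> n} \<le> \<epsilon>/n eventually, for each \<epsilon> = 1/(j+1).\<close>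
definition little_o_set :: "real ^ 'n \<Rightarrow> ((real ^ 'n) \<times> (real ^ 'n)) set" where
  "little_o_set r = {z. \<exists>K. \<forall>j. \<exists>N. \<forall>n\<ge>N. z \<in> approx_set r K (1 / real (Suc j)) n}"

lemma closed_approx_set: "closed (approx_set r K \<epsilon> n)"
proof -
  have "approx_set r K \<epsilon> n = (\<Union>m\<in>{1..n}. {z. \<forall>i. \<bar>snd z $ i\<bar> \<le> real K} \<inter>
          (\<lambda>z. real m *\<^sub>R fst z + snd z) -` near_int r (\<epsilon> / real n))"
    by (auto simp: approx_set_def near_int_box_def)
  moreover have "closed ((\<lambda>z. real m *\<^sub>R fst z + snd z) -` near_int r (\<epsilon> / real n))" for m
    by (intro continuous_closed_vimage closed_near_int continuous_intros)
  moreover have "closed {z :: (real ^ 'n) \<times> (real ^ 'n). \<forall>i. \<bar>snd z $ i\<bar> \<le> real K}"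
    by (intro closed_Collect_all closed_Collect_le continuous_intros)
  ultimately show ?thesis
    by (auto intro!: closed_UN closed_Int)
qed

lemma sets_little_o_set: "little_o_set r \<in> sets borel"
proof -
  have "little_o_set r = (\<Union>K. \<Inter>j. {z. \<exists>N. \<forall>n\<ge>N. z \<in> approx_set r K (1 / real (Suc j)) n})"
    by (auto simp: little_o_set_def)
  moreover have "{z. \<exists>N. \<forall>n\<ge>N. z \<in> approx_set r K (1 / real (Suc j)) n} \<in> sets borel" for K j
    by (intro sets_eventually_in borel_closed closed_approx_set)
  ultimately show ?thesis
    by (metis (no_types, lifting) sets.countable_INT sets.countable_UN image_subsetI UNIV_not_empty)
qed

lemma emeasure_approx_set_section_le:
  fixes r x :: "real ^ 'n"
  assumes "r \<in> weights" and "1 \<le> n" and "0 < \<epsilon>" and "\<epsilon> \<le> 1"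
  shows "emeasure lborel (Pair x -` approx_set r K \<epsilon> n)
           \<le> ennreal (((2 * real K + 3) * (2 * real K + 2)) ^ CARD('n) * \<epsilon>)"
proof -
  define C where "C = ((2 * real K + 3) * (2 * real K + 2)) ^ CARD('n)"
  have "Pair x -` approx_set r K \<epsilon> n = (\<Union>m\<in>{1..n}. near_int_box r K (\<epsilon> / real n) (real m *\<^sub>R x))"
    by (auto simp: approx_set_def)
  then have "emeasure lborel (Pair x -` approx_set r K \<epsilon> n)
      \<le> (\<Sum>m\<in>{1..n}. emeasure lborel (near_int_box r K (\<epsilon> / real n) (real m *\<^sub>R x)))"
    by (auto intro!: emeasure_subadditive_finite borel_closed closed_near_int_box)
  also have "\<dots> \<le> (\<Sum>m\<in>{1..n}. ennreal (C * (\<epsilon> / real n)))"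
  proof (rule sum_mono)
    fix m
    have "0 < \<epsilon> / real n" "\<epsilon> / real n \<le> 1"
      using assms by (auto simp: divide_le_eq)
    then show "emeasure lborel (near_int_box r K (\<epsilon> / real n) (real m *\<^sub>R x)) \<le> ennreal (C * (\<epsilon> / real n))"
      unfolding C_def by (rule emeasure_near_int_box_le[OF assms(1)])
  qed
  also have "\<dots> = ennreal (C * \<epsilon>)"
    using assms by (simp add: C_def ennreal_of_nat_eq_real_of_nat ennreal_mult'[symmetric])
  finally show ?thesis
    by (simp add: C_def)
qed

lemma null_sets_little_o_set_section:
  fixes r x :: "real ^ 'n"
  assumes r: "r \<in> weights"
  shows "Pair x -` little_o_set r \<in> null_sets lborel"
proof -
  define C where "C K = ((2 * real K + 3) * (2 * real K + 2)) ^ CARD('n)" for K :: nat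
  define E where "E K j = {y. \<exists>N. \<forall>n\<ge>N. y \<in> Pair x -` approx_set r K (1 / real (Suc j)) n}" for K j
  have section_sets: "Pair x -` approx_set r K \<epsilon> n \<in> sets borel" for K \<epsilon> n
    by (intro sets_Pair_vimage_borel borel_closed closed_approx_set)
  then have E_sets: "E K j \<in> sets borel" for K j
    unfolding E_def by (intro sets_eventually_in)
  have "(\<Inter>j. E K j) \<in> null_sets lborel" for K
  proof -
    have "emeasure lborel (\<Inter>j. E K j) \<le> ennreal (C K / real (Suc j))" for j
    proof -
      have "emeasure lborel (\<Inter>j. E K j) \<le> emeasure lborel (E K j)"
        using E_sets by (intro emeasure_mono) auto
      also have "\<dots> \<le> ennreal (C K * (1 / real (Suc j)))"
        unfolding E_def using section_sets
        by (intro emeasure_eventually_in_le[where N\<^sub>0 = 1] emeasure_approx_set_section_le[OF r, folded C_def])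
          auto
      finally show ?thesis by simp
    qed
    moreover have "(\<lambda>j. ennreal (C K / real (Suc j))) \<longlonglongrightarrow> 0"
      using tendsto_ennrealI[OF LIMSEQ_Suc[OF lim_const_over_n[of "C K"]]] by simp
    ultimately have "emeasure lborel (\<Inter>j. E K j) \<le> 0"
      by (intro LIMSEQ_le_const) auto
    then show ?thesis
      using E_sets by (intro null_setsI sets.countable_INT) auto
  qed
  moreover have "Pair x -` little_o_set r = (\<Union>K. \<Inter>j. E K j)"
    by (auto simp: little_o_set_def E_def)
  ultimately show ?thesis
    by (simp add: null_sets_UN)
qed

lemma Pi_set_subset_little_o_set:
  fixes r :: "real ^ 'n"
  shows "Pi_set r \<subseteq> little_o_set r"
proof clarify
  fix x y :: "real ^ 'n"
  assume xy: "(x, y) \<in> Pi_set r"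
  obtain K :: nat where "norm y \<le> real K"
    using real_arch_simple by blast
  then have y_le: "\<bar>y $ i\<bar> \<le> real K" for i
    using component_le_norm_cart order_trans by blast
  have "\<exists>N. \<forall>n\<ge>N. (x, y) \<in> approx_set r K (1 / real (Suc j)) n" for j
  proof -
    obtain N where N: "\<forall>n\<ge>N. \<exists>m\<in>{1..n}. rnorm r (real m *\<^sub>R x + y) ^ CARD('n) < 1 / real (Suc j) / real n"
      using xy by (atomize_elim, intro eventually_min_power_small_if_beats_classD)
        (auto simp: rnorm_def Pi_set_def W_set_def)
    have "(x, y) \<in> approx_set r K (1 / real (Suc j)) n" if "N \<le> n" for n
    proof -
      obtain m where m: "m \<in> {1..n}" "rnorm r (real m *\<^sub>R x + y) ^ CARD('n) < 1 / real (Suc j) / real n"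
        using N \<open>N \<le> n\<close> by blast
      then have "real m *\<^sub>R x + y \<in> near_int r (1 / real (Suc j) / real n)"
        by (auto simp: near_int_def less_imp_le dest: dist_Z_less_if_rnorm_power_less)
      then show ?thesis
        using m(1) y_le by (auto simp: approx_set_def near_int_box_def)
    qed
    then show ?thesis by blast
  qed
  then show "(x, y) \<in> little_o_set r"
    by (auto simp: little_o_set_def)
qed

theorem theorem15:
  fixes r :: "real ^ 'n"
  assumes "r \<in> weights"
  shows "Pi_set r \<in> sets lebesgue \<and> emeasure lebesgue (Pi_set r) = 0
    \<and> (\<forall>x. Phi_set r x \<in> sets lebesgue \<and> emeasure lebesgue (Phi_set r x) = 0)"
proof -
  have little_o_null: "little_o_set r \<in> null_sets lborel"
    using sets_little_o_set null_sets_little_o_set_section[OF assms]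
    by (rule null_sets_if_sections_null)
  have "Pi_set r \<in> null_sets lebesgue"
    using Pi_set_subset_little_o_set null_sets_completionI[OF little_o_null]
    by (rule null_sets_completion_subset)
  moreover have "Phi_set r x \<in> null_sets lebesgue" for x
  proof -
    have "Phi_set r x \<subseteq> Pair x -` little_o_set r"
      using Pi_set_subset_little_o_set by (auto simp: Phi_set_def)
    then show ?thesis
      using null_sets_completionI[OF null_sets_little_o_set_section[OF assms]]
      by (rule null_sets_completion_subset)
  qed
  ultimately show ?thesis
    by (simp add: null_sets_def)
qed

end
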